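(* Let $G$ be a finite nilpotent group and let $\mathcal F$ be a family of subgroups of $G$ which contains $G$ and all the maximal subgroups of $G$ and is closed under taking intersections. Let $\mathcal C: X_t<X_{t-1}<\dots<X_1<X_0$ be a chain of elements of $\mathcal F$. If $\mathcal C$ cannot be refined in $\mathcal F$ (i.e. no element of $\mathcal F$ can be added to $\mathcal C$ so that the result is still a chain), then $t\geq u$, where $u$ is the composition length of $G/\Phi(G)$ and $\Phi(G)$ is the Frattini subgroup of $G$. *)

theory Defs
  imports "HOL-Algebra.Algebra"
begin

definition commutator_subgroup :: "('a, 'b) monoid_scheme \<Rightarrow> 'a set \<Rightarrow> 'a set \<Rightarrow> 'a set" where
  "commutator_subgroup G A B = generate G
     (\<Union>a \<in> A. \<Union>b \<in> B. { a \<otimes>\<^bsub>G\<^esub> b \<otimes>\<^bsub>G\<^esub> inv\<^bsub>G\<^esub> a \<otimes>\<^bsub>G\<^esub> inv\<^bsub>G\<^esub> b })"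

fun lower_central :: "('a, 'b) monoid_scheme \<Rightarrow> nat \<Rightarrow> 'a set" where
  "lower_central G 0 = carrier G"
| "lower_central G (Suc n) = commutator_subgroup G (carrier G) (lower_central G n)"

definition nilpotent_group :: "('a, 'b) monoid_scheme \<Rightarrow> bool" where
  "nilpotent_group G \<longleftrightarrow> group G \<and> (\<exists>n. lower_central G n = {\<one>\<^bsub>G\<^esub>})"

definition maximal_subgroup :: "('a, 'b) monoid_scheme \<Rightarrow> 'a set \<Rightarrow> bool" where
  "maximal_subgroup G H \<longleftrightarrow> subgroup H G \<and> H \<noteq> carrier G \<and>
     (\<forall>K. subgroup K G \<and> H \<subseteq> K \<longrightarrow> K = H \<or> K = carrier G)"

text \<open>Frattini subgroup: intersection of all maximal subgroups (= G if there are none).\<close>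
definition frattini :: "('a, 'b) monoid_scheme \<Rightarrow> 'a set" where
  "frattini G = carrier G \<inter> \<Inter> {H. maximal_subgroup G H}"

text \<open>A composition series of Q, as a list Q = H_0 > H_1 > ... > H_n = 1, each H_(i+1)
  normal in H_i with simple factor H_i / H_(i+1). Its length is n = length Hs - 1.\<close>
definition composition_series :: "('c, 'd) monoid_scheme \<Rightarrow> 'c set list \<Rightarrow> bool" where
  "composition_series Q Hs \<longleftrightarrow> Hs \<noteq> [] \<and> hd Hs = carrier Q \<and> last Hs = {\<one>\<^bsub>Q\<^esub>} \<and>
     (\<forall>i < length Hs. subgroup (Hs ! i) Q) \<and>
     (\<forall>i. Suc i < length Hs \<longrightarrow>
        Hs ! Suc i \<lhd> subgroup_generated Q (Hs ! i) \<and>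
        simple_group (subgroup_generated Q (Hs ! i) Mod (Hs ! Suc i)))"

end

theory Submission
  imports Defs
begin

text \<open>For a subgroup \<open>X\<close> of \<open>G\<close> let \<open>T(X)\<close> (\<open>frattini_hull G X\<close>) be the intersection
  of the maximal subgroups containing \<open>X\<close>, and let \<open>\<Omega>(n)\<close> (\<open>bigomega n\<close>) count the prime
  factors of \<open>n\<close> with multiplicity. In a finite nilpotent group every maximal subgroup
  \<open>M\<close> is normal of prime index, and \<open>T(X \<inter> M) = T(X) \<inter> M\<close> whenever \<open>X \<nsubseteq> M\<close>. In an
  unrefinable chain each step \<open>X\<^sub>i > X\<^sub>i\<^sub>+\<^sub>1\<close> either leaves the set of maximal subgroups above it unchanged, or
  is \<open>X\<^sub>i\<^sub>+\<^sub>1 = X\<^sub>i \<inter> M\<close> for a maximal \<open>M\<close>. Hence \<open>\<Omega>|T(X\<^sub>i)|\<close> drops by at most one per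
  step; as \<open>T(X\<^sub>0) = G\<close> and \<open>T(X\<^sub>t) = \<Phi>(G)\<close>, this gives \<open>\<Omega>|G/\<Phi>(G)| \<le> t\<close>. Finally the
  length of any strictly descending chain of subgroups of \<open>G/\<Phi>(G)\<close>, in particular of a
  composition series, is at most \<open>\<Omega>|G/\<Phi>(G)|\<close>.\<close>

definition bigomega :: "nat \<Rightarrow> nat" where
  "bigomega n = size (prime_factorization n)"

lemma bigomega_mult: "a \<noteq> 0 \<Longrightarrow> b \<noteq> 0 \<Longrightarrow> bigomega (a * b) = bigomega a + bigomega b"
  unfolding bigomega_def by (simp add: prime_factorization_mult)

lemma bigomega_prime: "Factorial_Ring.prime p \<Longrightarrow> bigomega p = 1"
  unfolding bigomega_def by (simp add: prime_factorization_prime)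

lemma bigomega_less_if_proper_dvd:
  assumes "b dvd a" and "0 < b" and "b < a"
  shows "bigomega b < bigomega a"
proof -
  obtain k where a: "a = b * k" using assms(1) by blast
  then have "k \<noteq> 0" "k \<noteq> 1" using assms(2,3) by auto
  then have "prime_factorization k \<noteq> {#}" by (simp add: prime_factorization_empty_iff)
  then have "0 < bigomega k" unfolding bigomega_def by (simp add: nonempty_has_size)
  then show ?thesis using a bigomega_mult[of b k] assms(2) \<open>k \<noteq> 0\<close> by simp
qed

lemma maximal_subgroupD:
  assumes "maximal_subgroup G M"
  shows "subgroup M G" and "M \<noteq> carrier G"
    and "\<And>K. subgroup K G \<Longrightarrow> M \<subseteq> K \<Longrightarrow> K = M \<or> K = carrier G"
  using assms unfolding maximal_subgroup_def by auto

definition frattini_hull :: "('a, 'b) monoid_scheme \<Rightarrow> 'a set \<Rightarrow> 'a set" where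
  "frattini_hull G H = carrier G \<inter> \<Inter>{M. maximal_subgroup G M \<and> H \<subseteq> M}"

lemma frattini_hull_carrier: "frattini_hull G (carrier G) = carrier G"
  unfolding frattini_hull_def maximal_subgroup_def by (auto dest: subgroup.subset)

lemma frattini_hull_eq_frattini:
  "(\<And>M. maximal_subgroup G M \<Longrightarrow> H \<subseteq> M) \<Longrightarrow> frattini_hull G H = frattini G"
  unfolding frattini_hull_def frattini_def by blast

context group
begin

lemma card_subgroup_dvd_card:
  assumes "subgroup A G" and "subgroup B G" and "B \<subseteq> A"
  shows "card B dvd card A"
proof -
  interpret A: group "G\<lparr>carrier := A\<rparr>" using assms(1) by (rule subgroup_imp_group)
  have "subgroup B (G\<lparr>carrier := A\<rparr>)" using subgroup_incl assms by blast
  then have "card (rcosets\<^bsub>G\<lparr>carrier := A\<rparr>\<^esub> B) * card B = card A"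
    using A.lagrange by (simp add: order_def)
  then show ?thesis by (metis dvd_triv_right)
qed

lemma finite_subgroup: "finite (carrier G) \<Longrightarrow> subgroup H G \<Longrightarrow> finite H"
  by (metis finite_subset subgroup.subset)

lemma card_subgroup_pos: "finite (carrier G) \<Longrightarrow> subgroup H G \<Longrightarrow> 0 < card H"
  using finite_subgroup card_gt_0_iff subgroup.one_closed by blast

lemma card_set_mult_normal:
  assumes "N \<lhd> G" and "subgroup S G" and "finite (carrier G)"
  shows "card (N <#> S) * card (N \<inter> S) = card N * card S"
proof -
  interpret second_isomorphism_grp N G S
    using assms unfolding second_isomorphism_grp_def second_isomorphism_grp_axioms_def by auto
  interpret S: group "G\<lparr>carrier := S\<rparr>" using assms(2) by (rule subgroup_imp_group)
  interpret NS: group "G\<lparr>carrier := N <#> S\<rparr>"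
    using normal_set_mult_subgroup by (rule subgroup_imp_group)
  have "order (G\<lparr>carrier := S\<rparr> Mod (N \<inter> S)) = order (G\<lparr>carrier := N <#> S\<rparr> Mod N)"
    using normal_intersection_quotient_isom iso_same_order by blast
  then have index_eq: "card (rcosets\<^bsub>G\<lparr>carrier := S\<rparr>\<^esub> (N \<inter> S))
      = card (rcosets\<^bsub>G\<lparr>carrier := N <#> S\<rparr>\<^esub> N)"
    by (simp add: order_def FactGroup_def)
  have "subgroup (N \<inter> S) (G\<lparr>carrier := S\<rparr>)"
    using normal_subgrp_intersection_normal normal_imp_subgroup by (metis Int_commute)
  then have "card (rcosets\<^bsub>G\<lparr>carrier := S\<rparr>\<^esub> (N \<inter> S)) * card (N \<inter> S) = card S"
    using S.lagrange by (simp add: order_def)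
  moreover have "subgroup N (G\<lparr>carrier := N <#> S\<rparr>)"
    using subgroup_incl[OF is_subgroup normal_set_mult_subgroup H_contained_in_set_mult] .
  then have "card (rcosets\<^bsub>G\<lparr>carrier := N <#> S\<rparr>\<^esub> N) * card N = card (N <#> S)"
    using NS.lagrange by (simp add: order_def)
  ultimately show ?thesis using index_eq by (metis mult.assoc mult.commute)
qed

lemma maximal_subgroup_if_prime_index:
  assumes fin: "finite (carrier G)" and N: "subgroup N G"
    and q: "Factorial_Ring.prime q" "card (carrier G) = q * card N"
  shows "maximal_subgroup G N"
  unfolding maximal_subgroup_def
proof (intro conjI allI impI)
  have "0 < card N" using card_subgroup_pos fin N .
  moreover have "1 < q" using q(1) prime_gt_1_nat by blast
  ultimately show "N \<noteq> carrier G" using q(2) by auto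
  fix K assume K: "subgroup K G \<and> N \<subseteq> K"
  obtain a where a: "card K = card N * a"
    using card_subgroup_dvd_card[OF _ N] K by blast
  obtain b where b: "card (carrier G) = card K * b"
    using card_subgroup_dvd_card[OF subgroup_self] K subgroup.subset by blast
  have "q = a * b" using a b q(2) \<open>0 < card N\<close> by (simp add: mult.assoc)
  then have "a = 1 \<or> b = 1" using q(1) prime_product by blast
  then show "K = N \<or> K = carrier G"
  proof
    assume "a = 1"
    moreover have "finite K" using finite_subgroup fin K by blast
    ultimately have "N = K" using a K card_subset_eq by (metis mult_1_right)
    then show ?thesis by blast
  next
    assume "b = 1"
    then have "K = carrier G" using b K fin subgroup.subset card_subset_eq by (metis mult_1_right)
    then show ?thesis by blast
  qed
qed (use N in simp)

text \<open>By Sylow, \<open>G/M\<close> has a subgroup of some prime order \<open>p\<close>; its preimage properly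
  contains \<open>M\<close>, so it is \<open>G\<close>, of order \<open>p |M|\<close>.\<close>

lemma prime_index_if_maximal_normal:
  assumes fin: "finite (carrier G)" and M: "maximal_subgroup G M" and "M \<lhd> G"
  shows "\<exists>p. Factorial_Ring.prime p \<and> card (carrier G) = p * card M"
proof -
  interpret M: normal M G by fact
  note sM = maximal_subgroupD(1)[OF M] and maximal = maximal_subgroupD(3)[OF M]
  have lagrange_M: "order (G Mod M) * card M = card (carrier G)"
    using lagrange[OF sM] by (simp add: order_def FactGroup_def)
  have "order (G Mod M) \<noteq> 1"
  proof
    assume "order (G Mod M) = 1"
    then have "card M = card (carrier G)" using lagrange_M by simp
    then show False
      using maximal_subgroupD(2)[OF M] card_subset_eq[OF fin subgroup.subset[OF sM]] by blast
  qed
  then obtain p where p: "Factorial_Ring.prime p" "p dvd order (G Mod M)"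
    using prime_factor_nat by blast
  then obtain m where m: "order (G Mod M) = p ^ 1 * m" by auto
  have "finite (carrier (G Mod M))" by (simp add: carrier_FactGroup fin)
  then obtain A where A: "subgroup A (G Mod M)" "card A = p ^ 1"
    using sylow_thm[OF p(1) M.factorgroup_is_group m] by blast
  define K where "K = \<Union>A"
  have sK: "subgroup K G" unfolding K_def using M.factgroup_subgroup_union_subgroup[OF A(1)] .
  have A_eq: "A = rcosets\<^bsub>G\<lparr>carrier := K\<rparr>\<^esub> M"
    unfolding K_def using M.factgroup_subgroup_union_factor[OF A(1)] .
  have "M \<subseteq> K" unfolding K_def using subgroup.one_closed[OF A(1)] by auto
  interpret K: group "G\<lparr>carrier := K\<rparr>" using sK by (rule subgroup_imp_group)
  have "subgroup M (G\<lparr>carrier := K\<rparr>)" using subgroup_incl[OF sM sK \<open>M \<subseteq> K\<close>] .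
  then have "card A * card M = card K"
    unfolding A_eq using K.lagrange by (simp add: order_def)
  then have card_K: "p * card M = card K" using A(2) by simp
  moreover have "1 < p" using p(1) prime_gt_1_nat by blast
  ultimately have "K \<noteq> M" using card_subgroup_pos[OF fin sM] by auto
  then have "K = carrier G" using maximal[OF sK \<open>M \<subseteq> K\<close>] by blast
  then show ?thesis using card_K p(1) by metis
qed

lemma length_strict_subgroup_chain_le:
  assumes fin: "finite (carrier G)" and sub: "\<forall>i < length Hs. subgroup (Hs ! i) G"
    and strict: "\<forall>i. Suc i < length Hs \<longrightarrow> Hs ! Suc i \<subset> Hs ! i"
  shows "length Hs - 1 \<le> bigomega (card (Hs ! 0))"
proof -
  have chain: "bigomega (card (Hs ! i)) + i \<le> bigomega (card (Hs ! 0))" if "i < length Hs" for i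
    using that
  proof (induction i)
    case (Suc i)
    have sub_i: "subgroup (Hs ! i) G" and sub_Suc: "subgroup (Hs ! Suc i) G"
      and psub: "Hs ! Suc i \<subset> Hs ! i"
      using sub strict Suc.prems by auto
    have "card (Hs ! Suc i) < card (Hs ! i)"
      using psubset_card_mono[OF finite_subgroup[OF fin sub_i] psub] .
    moreover have "card (Hs ! Suc i) dvd card (Hs ! i)"
      using card_subgroup_dvd_card[OF sub_i sub_Suc] psub by blast
    moreover have "0 < card (Hs ! Suc i)" using card_subgroup_pos[OF fin sub_Suc] .
    ultimately have "bigomega (card (Hs ! Suc i)) < bigomega (card (Hs ! i))"
      by (simp add: bigomega_less_if_proper_dvd)
    then show ?case using Suc by simp
  qed simp
  show ?thesis
  proof (cases "Hs = []")
    case False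
    then show ?thesis using chain[of "length Hs - 1"] by simp
  qed simp
qed

lemma composition_series_strict:
  assumes fin: "finite (carrier G)" and series: "composition_series G Hs"
    and i: "Suc i < length Hs"
  shows "Hs ! Suc i \<subset> Hs ! i"
proof -
  have sub: "subgroup (Hs ! i) G" using series i unfolding composition_series_def by auto
  have normal: "Hs ! Suc i \<lhd> subgroup_generated G (Hs ! i)"
    and simple: "simple_group (subgroup_generated G (Hs ! i) Mod (Hs ! Suc i))"
    using series i unfolding composition_series_def by auto
  have carrier_gen: "carrier (subgroup_generated G (Hs ! i)) = Hs ! i"
    using subgroup.carrier_subgroup_generated_subgroup[OF sub] .
  have "Hs ! Suc i \<subseteq> Hs ! i"
    using normal normal_imp_subgroup subgroup.subset carrier_gen by metis
  moreover have "Hs ! Suc i \<noteq> Hs ! i"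
  proof
    assume "Hs ! Suc i = Hs ! i"
    then have "carrier (subgroup_generated G (Hs ! i) Mod Hs ! Suc i)
        = {\<one>\<^bsub>subgroup_generated G (Hs ! i) Mod Hs ! Suc i\<^esub>}"
      using normal.fact_group_trivial_iff[OF normal] carrier_gen fin finite_subgroup sub by simp
    then show False using simple_group.simple_not_triv[OF simple] by simp
  qed
  ultimately show ?thesis by blast
qed

lemma composition_series_length_le:
  assumes "finite (carrier G)" and "composition_series G Hs"
  shows "length Hs - 1 \<le> bigomega (order G)"
proof -
  have "Hs ! 0 = carrier G"
    using assms(2) unfolding composition_series_def by (metis hd_conv_nth)
  moreover have "\<forall>i < length Hs. subgroup (Hs ! i) G"
    using assms(2) unfolding composition_series_def by blast
  ultimately show ?thesis
    using length_strict_subgroup_chain_le[of Hs] assms composition_series_strict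
    by (simp add: order_def)
qed

lemma lower_central_subgroup: "subgroup (lower_central G n) G"
proof (induction n)
  case 0
  show ?case by (simp add: subgroup_self)
next
  case (Suc n)
  have "(\<Union>a \<in> carrier G. \<Union>b \<in> lower_central G n. {a \<otimes> b \<otimes> inv a \<otimes> inv b}) \<subseteq> carrier G"
    using subgroup.subset[OF Suc.IH] by auto
  then show ?case
    unfolding lower_central.simps commutator_subgroup_def by (rule generate_is_subgroup)
qed

lemma conj_mem_if_lower_central_Suc_subset:
  assumes M: "subgroup M G" and "lower_central G (Suc k) \<subseteq> M"
    and c: "c \<in> lower_central G k" and m: "m \<in> M"
  shows "c \<otimes> m \<otimes> inv c \<in> M"
proof -
  have cc: "c \<in> carrier G" using c subgroup.subset[OF lower_central_subgroup] by blast
  have mc: "m \<in> carrier G" using m subgroup.subset[OF M] by blast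
  have "m \<otimes> c \<otimes> inv m \<otimes> inv c \<in> lower_central G (Suc k)"
    unfolding lower_central.simps commutator_subgroup_def
    by (rule generate.incl) (use mc c in blast)
  then have "inv (m \<otimes> c \<otimes> inv m \<otimes> inv c) \<otimes> m \<in> M"
    using assms(2) M m by (blast intro: subgroup.m_closed subgroup.m_inv_closed)
  also have "inv (m \<otimes> c \<otimes> inv m \<otimes> inv c) \<otimes> m = c \<otimes> m \<otimes> inv c"
    using cc mc by (simp add: inv_mult_group m_assoc)
  finally show ?thesis .
qed

lemma normalizer_memI:
  assumes M: "M \<subseteq> carrier G" and g: "g \<in> carrier G"
    and "\<And>m. m \<in> M \<Longrightarrow> g \<otimes> m \<otimes> inv g \<in> M"
    and "\<And>m. m \<in> M \<Longrightarrow> inv g \<otimes> m \<otimes> g \<in> M"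
  shows "g \<in> normalizer G M"
proof -
  have "g <# M #> inv g = M"
  proof
    show "g <# M #> inv g \<subseteq> M"
      using assms(3) by (auto simp: l_coset_def r_coset_def)
    show "M \<subseteq> g <# M #> inv g"
    proof
      fix m assume m: "m \<in> M"
      then have "m \<in> carrier G" using M by blast
      then have "m = g \<otimes> (inv g \<otimes> m \<otimes> g) \<otimes> inv g"
        using g by (simp add: m_assoc) (simp add: m_assoc[symmetric])
      then show "m \<in> g <# M #> inv g"
        using assms(4)[OF m] unfolding l_coset_def r_coset_def by blast
    qed
  qed
  then show ?thesis
    using M g by (simp add: normalizer_def stabilizer_def)
qed

text \<open>If \<open>\<gamma>\<^sub>k\<^sub>+\<^sub>1(G) \<subseteq> M\<close> but \<open>\<gamma>\<^sub>k(G) \<nsubseteq> M\<close>, then \<open>\<gamma>\<^sub>k(G)\<close> normalises \<open>M\<close>, so the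
  normaliser of \<open>M\<close> is strictly larger than \<open>M\<close>.\<close>

lemma maximal_subgroup_normal_if_nilpotent:
  assumes "nilpotent_group G" and M: "maximal_subgroup G M"
  shows "M \<lhd> G"
proof -
  note sM = maximal_subgroupD(1)[OF M] and maximal = maximal_subgroupD(3)[OF M]
  obtain n where "lower_central G n = {\<one>}"
    using assms(1) unfolding nilpotent_group_def by blast
  then have "\<exists>n. lower_central G n \<subseteq> M"
    using subgroup.one_closed[OF sM] by (intro exI[of _ n]) simp
  moreover have "\<not> lower_central G 0 \<subseteq> M"
    using maximal_subgroupD(2)[OF M] subgroup.subset[OF sM] by auto
  ultimately obtain k where k: "\<not> lower_central G k \<subseteq> M" "lower_central G (Suc k) \<subseteq> M"
    using exists_least_lemma[where P = "\<lambda>n. lower_central G n \<subseteq> M"] by blast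
  have "lower_central G k \<subseteq> normalizer G M"
  proof
    fix c assume c: "c \<in> lower_central G k"
    have c_inv: "inv c \<in> lower_central G k"
      using subgroup.m_inv_closed[OF lower_central_subgroup c] .
    have "c \<in> carrier G" using c subgroup.subset[OF lower_central_subgroup] by blast
    then show "c \<in> normalizer G M"
    proof (rule normalizer_memI[OF subgroup.subset[OF sM]])
      fix m assume "m \<in> M"
      show "c \<otimes> m \<otimes> inv c \<in> M"
        using conj_mem_if_lower_central_Suc_subset[OF sM k(2) c \<open>m \<in> M\<close>] .
      show "inv c \<otimes> m \<otimes> c \<in> M"
        using conj_mem_if_lower_central_Suc_subset[OF sM k(2) c_inv \<open>m \<in> M\<close>]
          \<open>c \<in> carrier G\<close> by simp
    qed
  qed
  moreover have "M \<lhd> G\<lparr>carrier := normalizer G M\<rparr>"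
    using subgroup_in_normalizer[OF sM] .
  then have "M \<subseteq> normalizer G M"
    using normal_imp_subgroup subgroup.subset by fastforce
  ultimately have "normalizer G M = carrier G"
    using maximal[OF normalizer_imp_subgroup[OF subgroup.subset[OF sM]]] k(1) by blast
  then show ?thesis using subgroup_in_normalizer[OF sM] by simp
qed

lemma frattini_hull_subgroup: "subgroup (frattini_hull G H) G"
proof -
  have "subgroup (\<Inter>(insert (carrier G) {M. maximal_subgroup G M \<and> H \<subseteq> M})) G"
    by (rule subgroups_Inter) (auto simp: subgroup_self maximal_subgroup_def)
  then show ?thesis unfolding frattini_hull_def by simp
qed

lemma frattini_subgroup: "subgroup (frattini G) G"
  using frattini_hull_subgroup[of "{}"] frattini_hull_eq_frattini[of G "{}"] by simp

end

text \<open>These are exactly the finite nilpotent groups; nothing else about nilpotency is used.\<close>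

locale finite_group_normal_maximal = group +
  assumes finite_carrier: "finite (carrier G)"
    and maximal_subgroup_normal: "maximal_subgroup G M \<Longrightarrow> M \<lhd> G"
begin

lemma prime_index_maximal:
  "maximal_subgroup G M \<Longrightarrow> \<exists>p. Factorial_Ring.prime p \<and> card (carrier G) = p * card M"
  using prime_index_if_maximal_normal finite_carrier maximal_subgroup_normal by blast

lemma maximal_subgroup_if_card_eq:
  assumes "maximal_subgroup G N" and "subgroup K G" and "card K = card N"
  shows "maximal_subgroup G K"
  using prime_index_maximal[OF assms(1)] maximal_subgroup_if_prime_index finite_carrier assms(2,3)
  by metis

lemma card_carrier_mult_card_Int_maximal:
  assumes M: "maximal_subgroup G M" and A: "subgroup A G" and "\<not> A \<subseteq> M"
  shows "card (carrier G) * card (M \<inter> A) = card M * card A"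
proof -
  interpret second_isomorphism_grp M G A
    using maximal_subgroup_normal[OF M] A
    unfolding second_isomorphism_grp_def second_isomorphism_grp_axioms_def by auto
  have "M <#> A \<noteq> M" using S_contained_in_set_mult \<open>\<not> A \<subseteq> M\<close> by blast
  then have "M <#> A = carrier G"
    using maximal_subgroupD(3)[OF M normal_set_mult_subgroup H_contained_in_set_mult] by blast
  then show ?thesis
    using card_set_mult_normal[OF maximal_subgroup_normal[OF M] A finite_carrier] by simp
qed

lemma bigomega_card_le_Int_maximal:
  assumes M: "maximal_subgroup G M" and A: "subgroup A G"
  shows "bigomega (card A) \<le> bigomega (card (A \<inter> M)) + 1"
proof (cases "A \<subseteq> M")
  case False
  obtain p where p: "Factorial_Ring.prime p" "card (carrier G) = p * card M"
    using prime_index_maximal[OF M] by blast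
  have "0 < card M" using card_subgroup_pos[OF finite_carrier maximal_subgroupD(1)[OF M]] .
  then have "card A = p * card (A \<inter> M)"
    using card_carrier_mult_card_Int_maximal[OF M A False] p(2) by (simp add: Int_commute)
  moreover have "0 < card (A \<inter> M)"
    using card_subgroup_pos[OF finite_carrier subgroups_Inter_pair[OF A maximal_subgroupD(1)[OF M]]] .
  ultimately show ?thesis
    using bigomega_mult[of p "card (A \<inter> M)"] bigomega_prime[OF p(1)] p(1) prime_gt_0_nat by simp
qed (simp add: Int_absorb2)


lemma card_Int_maximal_set_mult:
  assumes H: "subgroup H G" and M: "maximal_subgroup G M" and N: "maximal_subgroup G N"
    and "H \<inter> M \<subseteq> N" and "\<not> H \<subseteq> M" and "N \<noteq> M"
  shows "card ((M \<inter> N) <#> H) = card N"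
proof -
  have normal_MN: "M \<inter> N \<lhd> G"
    using normal_subgroup_intersect maximal_subgroup_normal M N by blast
  interpret second_isomorphism_grp "M \<inter> N" G H
    using normal_MN H unfolding second_isomorphism_grp_def second_isomorphism_grp_axioms_def by auto
  have "M \<inter> N \<inter> H = M \<inter> H" using \<open>H \<inter> M \<subseteq> N\<close> by blast
  then have card_mult: "card ((M \<inter> N) <#> H) * card (M \<inter> H) = card (M \<inter> N) * card H"
    using card_set_mult_normal[OF normal_MN H finite_carrier] by simp
  have card_M_Int: "card (carrier G) * card (M \<inter> H) = card M * card H"
    using card_carrier_mult_card_Int_maximal[OF M H \<open>\<not> H \<subseteq> M\<close>] .
  have "\<not> N \<subseteq> M"
    using maximal_subgroupD[OF N] maximal_subgroupD(1,2)[OF M] \<open>N \<noteq> M\<close> by blast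
  then have card_MN: "card (carrier G) * card (M \<inter> N) = card M * card N"
    using card_carrier_mult_card_Int_maximal[OF M maximal_subgroupD(1)[OF N]] by blast
  have "card ((M \<inter> N) <#> H) * (card M * card H)
      = card (carrier G) * (card ((M \<inter> N) <#> H) * card (M \<inter> H))"
    using card_M_Int by (metis mult.left_commute)
  also have "\<dots> = card N * (card M * card H)"
    using card_mult card_MN by (metis mult.assoc mult.commute)
  finally show ?thesis
    using card_subgroup_pos[OF finite_carrier maximal_subgroupD(1)[OF M]]
      card_subgroup_pos[OF finite_carrier H] by simp
qed

lemma maximal_subgroup_above_with_Int_subset:
  assumes H: "subgroup H G" and M: "maximal_subgroup G M" and N: "maximal_subgroup G N"
    and "H \<inter> M \<subseteq> N" and "\<not> H \<subseteq> M" and "N \<noteq> M"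
  shows "\<exists>N'. maximal_subgroup G N' \<and> H \<subseteq> N' \<and> N' \<inter> M \<subseteq> N"
proof -
  define N' where "N' = (M \<inter> N) <#> H"
  interpret second_isomorphism_grp "M \<inter> N" G H
    using normal_subgroup_intersect maximal_subgroup_normal M N H
    unfolding second_isomorphism_grp_def second_isomorphism_grp_axioms_def by auto
  have "H \<subseteq> N'" and "M \<inter> N \<subseteq> N'"
    unfolding N'_def by (rule S_contained_in_set_mult, rule H_contained_in_set_mult)
  have card_N': "card N' = card N"
    unfolding N'_def using card_Int_maximal_set_mult assms by blast
  have max_N': "maximal_subgroup G N'"
    unfolding N'_def using maximal_subgroup_if_card_eq[OF N normal_set_mult_subgroup] card_N'
    by (simp add: N'_def)
  have "\<not> N' \<subseteq> M" using \<open>H \<subseteq> N'\<close> \<open>\<not> H \<subseteq> M\<close> by blast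
  then have "card (carrier G) * card (M \<inter> N') = card M * card N'"
    using card_carrier_mult_card_Int_maximal[OF M maximal_subgroupD(1)[OF max_N']] by blast
  moreover have "\<not> N \<subseteq> M"
    using maximal_subgroupD[OF N] maximal_subgroupD(1,2)[OF M] \<open>N \<noteq> M\<close> by blast
  then have "card (carrier G) * card (M \<inter> N) = card M * card N"
    using card_carrier_mult_card_Int_maximal[OF M maximal_subgroupD(1)[OF N]] by blast
  ultimately have "card (M \<inter> N) = card (M \<inter> N')"
    using card_N' card_subgroup_pos[OF finite_carrier subgroup_self] by (metis nat_mult_eq_cancel1)
  moreover have "finite (M \<inter> N')"
    using finite_subgroup[OF finite_carrier maximal_subgroupD(1)[OF M]] by blast
  moreover have "M \<inter> N \<subseteq> M \<inter> N'" using \<open>M \<inter> N \<subseteq> N'\<close> by blast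
  ultimately have "M \<inter> N = M \<inter> N'" using card_subset_eq by blast
  then show ?thesis using max_N' \<open>H \<subseteq> N'\<close> by blast
qed

lemma frattini_hull_Int_maximal:
  assumes H: "subgroup H G" and M: "maximal_subgroup G M" and "\<not> H \<subseteq> M"
  shows "frattini_hull G (H \<inter> M) = frattini_hull G H \<inter> M"
proof
  show "frattini_hull G (H \<inter> M) \<subseteq> frattini_hull G H \<inter> M"
    unfolding frattini_hull_def using M by blast
  show "frattini_hull G H \<inter> M \<subseteq> frattini_hull G (H \<inter> M)"
  proof
    fix x assume x: "x \<in> frattini_hull G H \<inter> M"
    have "x \<in> N" if N: "maximal_subgroup G N" "H \<inter> M \<subseteq> N" for N
    proof -
      consider "H \<subseteq> N" | "N = M" | "\<exists>N'. maximal_subgroup G N' \<and> H \<subseteq> N' \<and> N' \<inter> M \<subseteq> N"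
        using maximal_subgroup_above_with_Int_subset[OF H M N(1) N(2) \<open>\<not> H \<subseteq> M\<close>] by blast
      then show ?thesis using x N(1) unfolding frattini_hull_def by cases blast+
    qed
    then show "x \<in> frattini_hull G (H \<inter> M)" using x unfolding frattini_hull_def by blast
  qed
qed

lemma frattini_normal: "frattini G \<lhd> G"
  unfolding normal_inv_iff
proof (intro conjI frattini_subgroup ballI)
  fix x h assume x: "x \<in> carrier G" and h: "h \<in> frattini G"
  have "x \<otimes> h \<otimes> inv x \<in> M" if M: "maximal_subgroup G M" for M
    using h M x maximal_subgroup_normal[OF M] unfolding frattini_def normal_inv_iff by blast
  moreover have "x \<otimes> h \<otimes> inv x \<in> carrier G"
    using x h subgroup.subset[OF frattini_subgroup] by blast
  ultimately show "x \<otimes> h \<otimes> inv x \<in> frattini G" unfolding frattini_def by blast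
qed

end

locale unrefinable_chain = finite_group_normal_maximal +
  fixes \<F> :: "'a set set" and Xs :: "'a set list"
  assumes family_subgroup: "H \<in> \<F> \<Longrightarrow> subgroup H G"
    and maximal_mem_family: "maximal_subgroup G M \<Longrightarrow> M \<in> \<F>"
    and carrier_mem_family: "carrier G \<in> \<F>"
    and family_Int_closed: "A \<in> \<F> \<Longrightarrow> B \<in> \<F> \<Longrightarrow> A \<inter> B \<in> \<F>"
    and chain_nonempty: "Xs \<noteq> []"
    and chain_subset_family: "set Xs \<subseteq> \<F>"
    and chain_strict: "Suc i < length Xs \<Longrightarrow> Xs ! Suc i \<subset> Xs ! i"
    and chain_unrefinable: "Y \<in> \<F> \<Longrightarrow> \<forall>Z \<in> set Xs. Y \<subseteq> Z \<or> Z \<subseteq> Y \<Longrightarrow> Y \<in> set Xs"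
begin

lemma chain_antimono: "j \<le> i \<Longrightarrow> i < length Xs \<Longrightarrow> Xs ! i \<subseteq> Xs ! j"
proof (induction i)
  case (Suc i)
  then show ?case using chain_strict[of i] by (cases "j = Suc i") auto
qed simp

lemma chain_mem_family: "i < length Xs \<Longrightarrow> Xs ! i \<in> \<F>"
  using chain_subset_family nth_mem by blast

lemma chain_mem_if_comparable:
  assumes "Y \<in> \<F>" and "\<And>j. j < length Xs \<Longrightarrow> Y \<subseteq> Xs ! j \<or> Xs ! j \<subseteq> Y"
  shows "\<exists>k < length Xs. Y = Xs ! k"
proof -
  have "\<forall>Z \<in> set Xs. Y \<subseteq> Z \<or> Z \<subseteq> Y" using assms(2) by (metis in_set_conv_nth)
  then have "Y \<in> set Xs" using chain_unrefinable[OF assms(1)] by blast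
  then show ?thesis by (metis in_set_conv_nth)
qed

lemma chain_first_eq_carrier: "Xs ! 0 = carrier G"
proof -
  have sub_carrier: "Xs ! j \<subseteq> carrier G" if "j < length Xs" for j
    using subgroup.subset family_subgroup chain_mem_family that by blast
  then obtain k where k: "k < length Xs" "carrier G = Xs ! k"
    using chain_mem_if_comparable[OF carrier_mem_family] by blast
  have "Xs ! k \<subseteq> Xs ! 0" using chain_antimono[of 0 k] k(1) by simp
  moreover have "Xs ! 0 \<subseteq> carrier G" using sub_carrier chain_nonempty by simp
  ultimately show ?thesis using k(2) by blast
qed

text \<open>Here unrefinability is used: \<open>X\<^sub>i \<inter> M\<close> belongs to the family and is comparable
  with every member of the chain, so it is a member itself.\<close>

lemma chain_Int_maximal_cases:
  assumes i: "i < length Xs" and M: "maximal_subgroup G M"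
    and below: "Suc i < length Xs \<Longrightarrow> Xs ! Suc i \<subseteq> M"
  shows "Xs ! i \<subseteq> M \<or> (Suc i < length Xs \<and> Xs ! Suc i = Xs ! i \<inter> M)"
proof -
  have comparable: "Xs ! i \<inter> M \<subseteq> Xs ! j \<or> Xs ! j \<subseteq> Xs ! i \<inter> M"
    if j: "j < length Xs" for j
  proof (cases "j \<le> i")
    case True
    then show ?thesis using chain_antimono[of j i] i by blast
  next
    case False
    then have "Xs ! j \<subseteq> Xs ! Suc i" "Xs ! Suc i \<subseteq> Xs ! i"
      using chain_antimono j by auto
    then show ?thesis using below j False by auto
  qed
  have "Xs ! i \<inter> M \<in> \<F>"
    using family_Int_closed chain_mem_family[OF i] maximal_mem_family[OF M] by blast
  then obtain k where k: "k < length Xs" "Xs ! i \<inter> M = Xs ! k"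
    using chain_mem_if_comparable comparable by blast
  show ?thesis
  proof (cases "k \<le> i")
    case True
    then show ?thesis using chain_antimono[of k i] i k by blast
  next
    case False
    then have "Xs ! k \<subseteq> Xs ! Suc i" "Xs ! Suc i \<subseteq> Xs ! i"
      using chain_antimono k(1) by auto
    then show ?thesis using below k False by auto
  qed
qed

lemma chain_last_subset_maximal: "maximal_subgroup G M \<Longrightarrow> Xs ! (length Xs - 1) \<subseteq> M"
  using chain_Int_maximal_cases[of "length Xs - 1" M] chain_nonempty by simp

lemma bigomega_frattini_hull_chain_step:
  assumes i: "Suc i < length Xs"
  shows "bigomega (card (frattini_hull G (Xs ! i)))
    \<le> bigomega (card (frattini_hull G (Xs ! Suc i))) + 1"
proof (cases "\<exists>M. maximal_subgroup G M \<and> Xs ! Suc i \<subseteq> M \<and> \<not> Xs ! i \<subseteq> M")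
  case True
  then obtain M where M: "maximal_subgroup G M" "Xs ! Suc i \<subseteq> M" "\<not> Xs ! i \<subseteq> M" by blast
  then have "Xs ! Suc i = Xs ! i \<inter> M" using chain_Int_maximal_cases[of i M] i by auto
  then have "frattini_hull G (Xs ! Suc i) = frattini_hull G (Xs ! i) \<inter> M"
    using frattini_hull_Int_maximal family_subgroup chain_mem_family i M by simp
  then show ?thesis using bigomega_card_le_Int_maximal[OF M(1) frattini_hull_subgroup] by simp
next
  case False
  moreover have "Xs ! Suc i \<subseteq> Xs ! i" using chain_antimono i by simp
  ultimately have "frattini_hull G (Xs ! i) = frattini_hull G (Xs ! Suc i)"
    unfolding frattini_hull_def by blast
  then show ?thesis by simp
qed

lemma bigomega_order_frattini_quotient_le: "bigomega (order (G Mod frattini G)) \<le> length Xs - 1"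
proof -
  have chain: "bigomega (card (carrier G)) \<le> bigomega (card (frattini_hull G (Xs ! i))) + i"
    if "i < length Xs" for i
    using that
  proof (induction i)
    case 0
    show ?case using frattini_hull_carrier[of G] by (simp add: chain_first_eq_carrier)
  next
    case (Suc i)
    then show ?case using bigomega_frattini_hull_chain_step[of i] by simp
  qed
  have "frattini_hull G (Xs ! (length Xs - 1)) = frattini G"
    using frattini_hull_eq_frattini chain_last_subset_maximal by blast
  then have le: "bigomega (card (carrier G)) \<le> bigomega (card (frattini G)) + (length Xs - 1)"
    using chain[of "length Xs - 1"] chain_nonempty by simp
  have lagrange_frattini: "order (G Mod frattini G) * card (frattini G) = card (carrier G)"
    using lagrange[OF frattini_subgroup] by (simp add: order_def FactGroup_def)
  moreover have "0 < card (carrier G)" using card_subgroup_pos[OF finite_carrier subgroup_self] .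
  ultimately have nonzero: "order (G Mod frattini G) \<noteq> 0" "card (frattini G) \<noteq> 0"
    by (metis mult_is_0 not_gr0)+
  have "bigomega (card (carrier G))
      = bigomega (order (G Mod frattini G)) + bigomega (card (frattini G))"
    using bigomega_mult[OF nonzero] lagrange_frattini by simp
  with le show ?thesis by simp
qed

end

theorem mainTheorem4:
  fixes G (structure)
    and \<F> :: "'a set set"
    and Xs :: "'a set list"
  assumes "group G"
    and "finite (carrier G)"
    and "nilpotent_group G"
    and "\<forall>H \<in> \<F>. subgroup H G"
    and "carrier G \<in> \<F>"
    and "\<forall>M. maximal_subgroup G M \<longrightarrow> M \<in> \<F>"
    and "\<forall>A \<in> \<F>. \<forall>B \<in> \<F>. A \<inter> B \<in> \<F>"
    and "Xs \<noteq> []"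
    and "set Xs \<subseteq> \<F>"
    and "\<forall>i. Suc i < length Xs \<longrightarrow> Xs ! Suc i \<subset> Xs ! i"
    and "\<not> (\<exists>Y \<in> \<F>. Y \<notin> set Xs \<and> (\<forall>Z \<in> set Xs. Y \<subseteq> Z \<or> Z \<subseteq> Y))"
  shows "\<forall>Hs. composition_series (G Mod frattini G) Hs \<longrightarrow> length Hs - 1 \<le> length Xs - 1"
proof -
  have "finite_group_normal_maximal G"
    using assms(1,2) group.maximal_subgroup_normal_if_nilpotent[OF assms(1,3)]
    by (simp add: finite_group_normal_maximal_def finite_group_normal_maximal_axioms_def)
  then interpret unrefinable_chain G \<F> Xs
    by (rule unrefinable_chain.intro, intro unrefinable_chain_axioms.intro) (use assms(4-11) in blast)+
  interpret Q: group "G Mod frattini G"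
    using normal.factorgroup_is_group[OF frattini_normal] .
  have "finite (carrier (G Mod frattini G))"
    using finite_carrier by (simp add: carrier_FactGroup)
  then have "composition_series (G Mod frattini G) Hs \<Longrightarrow> length Hs - 1 \<le> length Xs - 1" for Hs
    using Q.composition_series_length_le bigomega_order_frattini_quotient_le le_trans by blast
  then show ?thesis by blast
qed

end
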